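(* Let $X$ be an AM-space such that the closed unit ball $\mathbf B(X)$ is the norm closed solid convex hull of finitely many of its elements. Then $X$ is lattice isometric to $C(K)$ for some compact Hausdorff space $K$.
   Context: An AM-space is a Banach lattice whose norm satisfies $\|x\vee y\|=\max(\|x\|,\|y\|)$ for all $x,y\ge0$. The solid convex hull of $S$ is the smallest convex set $D\supseteq S$ such that $x\in X$, $z\in D$, $|x|\le|z|$ imply $x\in D$. *)

theory Defs
  imports "HOL-Analysis.Analysis"
begin

text \<open>Real Banach lattices are modelled on a type of class
  banach + ordered_real_vector + lattice (a real vector lattice with a complete norm),
  together with the lattice-norm axiom stated by banach_lattice below.\<close>

definition labs :: "'a::{ordered_real_vector, lattice} \<Rightarrow> 'a" where
  "labs x = sup x (- x)"

definition banach_lattice :: "'a::{banach, ordered_real_vector, lattice} itself \<Rightarrow> bool" where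
  "banach_lattice _ \<longleftrightarrow> (\<forall>x y :: 'a. labs x \<le> labs y \<longrightarrow> norm x \<le> norm y)"

definition AM_space :: "'a::{banach, ordered_real_vector, lattice} itself \<Rightarrow> bool" where
  "AM_space T \<longleftrightarrow> banach_lattice T \<and>
     (\<forall>x y :: 'a. 0 \<le> x \<longrightarrow> 0 \<le> y \<longrightarrow> norm (sup x y) = max (norm x) (norm y))"

definition solid :: "'a::{ordered_real_vector, lattice} set \<Rightarrow> bool" where
  "solid D \<longleftrightarrow> (\<forall>x z. z \<in> D \<longrightarrow> labs x \<le> labs z \<longrightarrow> x \<in> D)"

definition solid_convex_hull :: "'a::{real_vector, ordered_real_vector, lattice} set \<Rightarrow> 'a set" where
  "solid_convex_hull S = \<Inter> {D. S \<subseteq> D \<and> convex D \<and> solid D}"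

text \<open>The space C(K) of continuous real functions on a topological space K, represented
  extensionally (functions vanishing outside the carrier), with the sup norm.\<close>
definition Cfun :: "'b topology \<Rightarrow> ('b \<Rightarrow> real) set" where
  "Cfun K = {f. continuous_map K euclideanreal f \<and> (\<forall>t. t \<notin> topspace K \<longrightarrow> f t = 0)}"

definition sup_norm :: "'b topology \<Rightarrow> ('b \<Rightarrow> real) \<Rightarrow> real" where
  "sup_norm K f = (if topspace K = {} then 0 else (SUP t\<in>topspace K. \<bar>f t\<bar>))"

definition lattice_isometry_onto_CK ::
    "('a::{real_normed_vector, ordered_real_vector, lattice} \<Rightarrow> ('b \<Rightarrow> real)) \<Rightarrow> 'b topology \<Rightarrow> bool" where
  "lattice_isometry_onto_CK \<Phi> K \<longleftrightarrow>
     bij_betw \<Phi> UNIV (Cfun K) \<and>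
     (\<forall>x y. \<Phi> (x + y) = (\<lambda>t. \<Phi> x t + \<Phi> y t)) \<and>
     (\<forall>c x. \<Phi> (c *\<^sub>R x) = (\<lambda>t. c * \<Phi> x t)) \<and>
     (\<forall>x y. \<Phi> (sup x y) = (\<lambda>t. max (\<Phi> x t) (\<Phi> y t))) \<and>
     (\<forall>x. sup_norm K (\<Phi> x) = norm x)"

end

theory Submission
  imports Defs "HOL-Library.Lattice_Algebras"
begin

text \<open>Let e be the supremum of the moduli of the finitely many generators of the unit ball.
  The AM-property gives norm e \<le> 1, and the order interval {x. labs x \<le> e} is closed, convex
  and solid, so it contains the closed solid convex hull: the unit ball is exactly this order
  interval, i.e. e is a strong unit with norm x the least c such that labs x \<le> c e.
  Kakutani's argument then applies. The real lattice homomorphisms \<phi> with \<phi> e = 1 form a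
  compact Hausdorff space K in the product topology. Every maximal ideal M satisfies
  M + \<real>e = X and so defines such a \<phi>; choosing M to contain e - labs x / norm x shows that
  norm x = max over K of \<bar>\<phi> x\<bar>. Hence x \<mapsto> (\<phi> \<mapsto> \<phi> x) is a lattice isometry into C(K); its
  range is a sublattice that interpolates any two values at any two points, so it is dense by
  the lattice Stone-Weierstrass theorem, and closed because X is complete.\<close>

section \<open>Real vector lattices\<close>

text \<open>Via labs every real vector lattice is a lattice-ordered group with absolute value,
  which makes the library's facts about abs and the positive part pprt available.\<close>

interpretation vector_lattice:
  lattice_ab_group_add_abs labs "(+)" "0::'a::{ordered_real_vector, lattice}" "(-)" uminus
    "(\<le>)" "(<)" inf sup
  by unfold_locales (simp add: labs_def)

lemma scaleR_sup_nonneg: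
  fixes a b :: "'a::{ordered_real_vector, lattice}"
  assumes "0 \<le> c"
  shows "c *\<^sub>R sup a b = sup (c *\<^sub>R a) (c *\<^sub>R b)"
proof (cases "c = 0")
  case False
  with assms have c: "0 < c" by simp
  show ?thesis
  proof (rule antisym)
    have "a \<le> inverse c *\<^sub>R sup (c *\<^sub>R a) (c *\<^sub>R b)" "b \<le> inverse c *\<^sub>R sup (c *\<^sub>R a) (c *\<^sub>R b)"
      using c scaleR_left_mono[of "c *\<^sub>R a" "sup (c *\<^sub>R a) (c *\<^sub>R b)" "inverse c"]
        scaleR_left_mono[of "c *\<^sub>R b" "sup (c *\<^sub>R a) (c *\<^sub>R b)" "inverse c"]
      by simp_all
    then have "sup a b \<le> inverse c *\<^sub>R sup (c *\<^sub>R a) (c *\<^sub>R b)" by simp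
    from scaleR_left_mono[OF this, of c] c
    show "c *\<^sub>R sup a b \<le> sup (c *\<^sub>R a) (c *\<^sub>R b)" by simp
    show "sup (c *\<^sub>R a) (c *\<^sub>R b) \<le> c *\<^sub>R sup a b"
      using c by (simp add: scaleR_left_mono)
  qed
qed simp

lemma scaleR_inf_nonneg:
  fixes a b :: "'a::{ordered_real_vector, lattice}"
  assumes "0 \<le> c"
  shows "c *\<^sub>R inf a b = inf (c *\<^sub>R a) (c *\<^sub>R b)"
proof -
  have "c *\<^sub>R inf a b = - (c *\<^sub>R sup (- a) (- b))"
    unfolding vector_lattice.inf_eq_neg_sup[of a b] by (rule scaleR_minus_right)
  also have "\<dots> = - sup (- (c *\<^sub>R a)) (- (c *\<^sub>R b))"
    unfolding scaleR_sup_nonneg[OF assms] by simp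
  also have "\<dots> = inf (c *\<^sub>R a) (c *\<^sub>R b)"
    by (rule vector_lattice.inf_eq_neg_sup[symmetric])
  finally show ?thesis .
qed

lemma labs_scaleR: "labs (c *\<^sub>R x) = \<bar>c\<bar> *\<^sub>R labs (x::'a::{ordered_real_vector, lattice})"
proof -
  have nonneg: "labs (d *\<^sub>R y) = d *\<^sub>R labs y" if "0 \<le> d" for d and y :: 'a
    using that by (simp add: labs_def scaleR_sup_nonneg)
  show ?thesis
  proof (cases "0 \<le> c")
    case False
    then have "labs (c *\<^sub>R x) = labs (\<bar>c\<bar> *\<^sub>R - x)" by simp
    then show ?thesis by (simp add: nonneg)
  qed (simp add: nonneg)
qed

lemma scaleR_max_nonneg:
  fixes e :: "'a::{ordered_real_vector, lattice}"
  assumes "0 \<le> e"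
  shows "max l m *\<^sub>R e = sup (l *\<^sub>R e) (m *\<^sub>R e)"
proof (cases "l \<le> m")
  case True
  then show ?thesis using scaleR_right_mono[OF True assms] by (simp add: sup_absorb2)
next
  case False
  then have "m \<le> l" by simp
  with False show ?thesis using scaleR_right_mono[OF \<open>m \<le> l\<close> assms] by (simp add: sup_absorb1)
qed

lemma labs_sup_diff_le:
  fixes a b c d :: "'a::{ordered_real_vector, lattice}"
  shows "labs (sup a b - sup c d) \<le> labs (a - c) + labs (b - d)"
proof -
  have le: "sup a b \<le> sup c d + (labs (a - c) + labs (b - d))" for a b c d :: 'a
  proof -
    have "a \<le> c + labs (a - c)" "b \<le> d + labs (b - d)"
      using vector_lattice.abs_ge_self[of "a - c"] vector_lattice.abs_ge_self[of "b - d"]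
      by (simp_all add: algebra_simps)
    moreover have "c + labs (a - c) \<le> sup c d + (labs (a - c) + labs (b - d))"
      "d + labs (b - d) \<le> sup c d + (labs (a - c) + labs (b - d))"
      by (auto intro!: add_mono add_increasing2[OF vector_lattice.abs_ge_zero]
          simp: add.assoc[symmetric])
    ultimately show ?thesis by (meson order_trans sup_least)
  qed
  show ?thesis
  proof (rule vector_lattice.abs_leI)
    show "sup a b - sup c d \<le> labs (a - c) + labs (b - d)"
      by (metis le diff_le_eq add.commute)
    show "- (sup a b - sup c d) \<le> labs (a - c) + labs (b - d)"
      by (metis le minus_diff_eq diff_le_eq add.commute vector_lattice.abs_minus_commute)
  qed
qed

lemma inf_pprt_pprt_minus:
  "inf (vector_lattice.pprt w) (vector_lattice.pprt (- w)) = (0::'a::{ordered_real_vector, lattice})"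
proof -
  have "vector_lattice.pprt (- w) = vector_lattice.pprt w + - w"
    using vector_lattice.add_sup_distrib_right[of w 0 "- w"]
    by (simp add: vector_lattice.pprt_def sup_commute)
  moreover have "inf 0 (- w) = - vector_lattice.pprt w"
    unfolding vector_lattice.pprt_def vector_lattice.inf_eq_neg_sup[of 0] by (simp add: sup_commute)
  ultimately show ?thesis
    using vector_lattice.add_inf_distrib_left[of "vector_lattice.pprt w" 0 "- w"] by simp
qed

lemma labs_eq_pprt_add_pprt_minus:
  "labs w = vector_lattice.pprt w + vector_lattice.pprt (- (w::'a::{ordered_real_vector, lattice}))"
  by (simp add: vector_lattice.abs_prts vector_lattice.pprt_neg)

section \<open>The unit ball as an order interval\<close>

lemma labs_eq_self_iff: "labs x = x \<longleftrightarrow> 0 \<le> (x::'a::{ordered_real_vector, lattice})"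
  by (metis vector_lattice.abs_ge_zero vector_lattice.abs_of_nonneg)

lemma convex_order_interval: "convex {x. labs x \<le> (e::'a::{ordered_real_vector, lattice})}"
proof (rule convexI)
  fix x y :: 'a and u v :: real
  assume xy: "x \<in> {x. labs x \<le> e}" "y \<in> {x. labs x \<le> e}" and uv: "0 \<le> u" "0 \<le> v" "u + v = 1"
  have "labs (u *\<^sub>R x + v *\<^sub>R y) \<le> u *\<^sub>R labs x + v *\<^sub>R labs y"
    using vector_lattice.abs_triangle_ineq[of "u *\<^sub>R x" "v *\<^sub>R y"] uv by (simp add: labs_scaleR)
  also have "\<dots> \<le> u *\<^sub>R e + v *\<^sub>R e"
    using xy uv by (intro add_mono scaleR_left_mono) auto
  also have "\<dots> = e"
    using uv by (simp flip: scaleR_add_left)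
  finally show "u *\<^sub>R x + v *\<^sub>R y \<in> {x. labs x \<le> e}" by simp
qed

lemma solid_order_interval: "solid {x. labs x \<le> (e::'a::{ordered_real_vector, lattice})}"
  unfolding solid_def by (auto elim: order_trans)

lemma norm_labs:
  assumes "banach_lattice TYPE('a::{banach, ordered_real_vector, lattice})"
  shows "norm (labs (x::'a)) = norm x"
  using assms unfolding banach_lattice_def by (metis antisym order_refl vector_lattice.abs_idempotent)

lemma continuous_on_labs:
  assumes "banach_lattice TYPE('a::{banach, ordered_real_vector, lattice})"
  shows "continuous_on S (labs :: 'a \<Rightarrow> 'a)"
proof (rule lipschitz_on_continuous_on[of 1], rule lipschitz_onI)
  fix x y :: 'a
  have "norm (labs x - labs y) \<le> norm (x - y)"
    using assms vector_lattice.abs_triangle_ineq3[of x y] unfolding banach_lattice_def by simp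
  then show "dist (labs x) (labs y) \<le> 1 * dist x y" by (simp add: dist_norm)
qed simp

lemma closed_order_interval:
  assumes "banach_lattice TYPE('a::{banach, ordered_real_vector, lattice})"
  shows "closed {x. labs x \<le> (e::'a)}"
proof -
  have "{x. labs x \<le> e} = {x. labs (e - labs x) = e - labs x}"
    by (simp add: labs_eq_self_iff)
  moreover have "continuous_on UNIV (\<lambda>x::'a. e - labs x)"
    by (intro continuous_intros continuous_on_labs[OF assms])
  ultimately show ?thesis
    using continuous_on_compose2[OF continuous_on_labs[OF assms]]
    by (metis (mono_tags) closed_Collect_eq subset_UNIV)
qed

lemma closure_solid_convex_hull_subset:
  assumes "S \<subseteq> D" "convex D" "solid D" "closed D"
  shows "closure (solid_convex_hull S) \<subseteq> D"
  using assms unfolding solid_convex_hull_def by (intro closure_minimal) auto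

lemma AM_space_finite_set_dominated:
  assumes "AM_space TYPE('a::{banach, ordered_real_vector, lattice})"
    and "finite S" "S \<subseteq> cball (0::'a) 1"
  shows "\<exists>e. 0 \<le> e \<and> norm e \<le> 1 \<and> (\<forall>s\<in>S. labs s \<le> e)"
  using assms(2,3)
proof (induction S rule: finite_induct)
  case empty
  show ?case by (intro exI[of _ 0]) auto
next
  case (insert s F)
  then obtain e where e: "0 \<le> e" "norm e \<le> 1" "\<forall>t\<in>F. labs t \<le> e" by auto
  have BL: "banach_lattice TYPE('a)" using assms(1) by (simp add: AM_space_def)
  have "norm (sup (labs s) e) = max (norm s) (norm e)"
    using assms(1) e(1) norm_labs[OF BL, of s] unfolding AM_space_def by simp
  then have "norm (sup (labs s) e) \<le> 1" using insert.prems e(2) by simp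
  moreover have "0 \<le> sup (labs s) e" using e(1) le_supI2 by blast
  ultimately show ?case using e(3) le_supI2 by (intro exI[of _ "sup (labs s) e"]) auto
qed

lemma AM_space_unit_ball_eq_order_interval:
  assumes AM: "AM_space TYPE('a::{banach, ordered_real_vector, lattice})"
    and S: "finite S" "S \<subseteq> cball (0::'a) 1" "cball (0::'a) 1 = closure (solid_convex_hull S)"
  shows "\<exists>e::'a. 0 \<le> e \<and> (\<forall>x. norm x \<le> 1 \<longleftrightarrow> labs x \<le> e)"
proof -
  have BL: "banach_lattice TYPE('a)" using AM by (simp add: AM_space_def)
  obtain e :: 'a where e: "0 \<le> e" "norm e \<le> 1" "\<forall>s\<in>S. labs s \<le> e"
    using AM_space_finite_set_dominated[OF AM S(1,2)] by blast
  have "cball 0 1 \<subseteq> {x. labs x \<le> e}"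
    unfolding S(3) using e(3) convex_order_interval solid_order_interval closed_order_interval[OF BL]
    by (intro closure_solid_convex_hull_subset) auto
  moreover have "norm x \<le> 1" if "labs x \<le> e" for x
    using BL e that unfolding banach_lattice_def by (metis vector_lattice.abs_of_nonneg order_trans)
  ultimately show ?thesis using e(1) by (auto simp: subset_iff)
qed

section \<open>Lattice ideals\<close>

definition lattice_ideal :: "'a::{ordered_real_vector, lattice} set \<Rightarrow> bool" where
  "lattice_ideal I \<longleftrightarrow> subspace I \<and> solid I"

lemma lattice_ideal_solid: "lattice_ideal I \<Longrightarrow> z \<in> I \<Longrightarrow> labs x \<le> labs z \<Longrightarrow> x \<in> I"
  unfolding lattice_ideal_def solid_def by blast

lemma lattice_ideal_labs: "lattice_ideal I \<Longrightarrow> x \<in> I \<Longrightarrow> labs x \<in> I"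
  using lattice_ideal_solid[of I x "labs x"] by simp

lemma lattice_ideal_nonneg_le: "lattice_ideal I \<Longrightarrow> y \<in> I \<Longrightarrow> 0 \<le> x \<Longrightarrow> x \<le> y \<Longrightarrow> x \<in> I"
  by (erule lattice_ideal_solid) (auto intro: order_trans vector_lattice.abs_ge_self)

lemma lattice_ideal_Union_chain:
  assumes "C \<noteq> {}" "subset.chain {I. lattice_ideal I} C"
  shows "lattice_ideal (\<Union>C)"
proof -
  have ideal: "subspace I" "solid I" if "I \<in> C" for I
    using assms(2) that unfolding subset_chain_def lattice_ideal_def by blast+
  have "x + y \<in> \<Union>C" if xy: "x \<in> \<Union>C" "y \<in> \<Union>C" for x y
  proof -
    obtain I J where IJ: "I \<in> C" "J \<in> C" "x \<in> I" "y \<in> J" using xy by blast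
    then have "I \<subseteq> J \<or> J \<subseteq> I" using assms(2) unfolding subset_chain_def by blast
    then show ?thesis
      using IJ subspace_add[OF ideal(1)[OF IJ(1)], of x y] subspace_add[OF ideal(1)[OF IJ(2)], of x y]
      by blast
  qed
  moreover have "0 \<in> \<Union>C" using assms(1) subspace_0[OF ideal(1)] by blast
  moreover have "c *\<^sub>R x \<in> \<Union>C" if "x \<in> \<Union>C" for c x
    using that subspace_mul[OF ideal(1)] by blast
  moreover have "solid (\<Union>C)"
    using ideal(2) unfolding solid_def by blast
  ultimately show ?thesis
    unfolding lattice_ideal_def subspace_def by blast
qed

lemma lattice_ideal_zero: "lattice_ideal {0::'a::{ordered_real_vector, lattice}}"
  unfolding lattice_ideal_def solid_def by (auto simp: subspace_def)

definition ideal_extension :: "'a::{ordered_real_vector, lattice} set \<Rightarrow> 'a \<Rightarrow> 'a set" where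
  "ideal_extension I p = {z. \<exists>m\<in>I. \<exists>c\<ge>0. labs z \<le> labs m + c *\<^sub>R p}"

lemma subset_ideal_extension: "I \<subseteq> ideal_extension I p"
  unfolding ideal_extension_def by force

lemma mem_ideal_extension:
  assumes "lattice_ideal I" "0 \<le> p"
  shows "p \<in> ideal_extension I p"
  using assms unfolding ideal_extension_def lattice_ideal_def
  by (intro CollectI bexI[of _ 0] exI[of _ 1]) (auto dest: subspace_0)

lemma lattice_ideal_ideal_extension:
  assumes I: "lattice_ideal I" and p: "0 \<le> p"
  shows "lattice_ideal (ideal_extension I p)"
proof -
  have sub: "subspace I" using I by (simp add: lattice_ideal_def)
  show ?thesis
    unfolding lattice_ideal_def subspace_def
  proof (intro conjI ballI allI)
    show "0 \<in> ideal_extension I p"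
      using subset_ideal_extension subspace_0[OF sub] by blast
    fix x y assume "x \<in> ideal_extension I p" "y \<in> ideal_extension I p"
    then obtain m1 c1 m2 c2 where m: "m1 \<in> I" "c1 \<ge> 0" "labs x \<le> labs m1 + c1 *\<^sub>R p"
      "m2 \<in> I" "c2 \<ge> 0" "labs y \<le> labs m2 + c2 *\<^sub>R p" unfolding ideal_extension_def by blast
    have "labs (x + y) \<le> (labs m1 + c1 *\<^sub>R p) + (labs m2 + c2 *\<^sub>R p)"
      using vector_lattice.abs_triangle_ineq[of x y] m(3,6) by (meson add_mono order_trans)
    also have "\<dots> = labs (labs m1 + labs m2) + (c1 + c2) *\<^sub>R p"
      by (simp only: vector_lattice.abs_add_abs scaleR_add_left ac_simps)
    finally show "x + y \<in> ideal_extension I p"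
      using m unfolding ideal_extension_def
      by (intro CollectI bexI[of _ "labs m1 + labs m2"] exI[of _ "c1 + c2"])
        (auto intro: subspace_add[OF sub] lattice_ideal_labs[OF I])
  next
    fix c x assume "x \<in> ideal_extension I p"
    then obtain m c1 where m: "m \<in> I" "c1 \<ge> 0" "labs x \<le> labs m + c1 *\<^sub>R p"
      unfolding ideal_extension_def by blast
    have "labs (c *\<^sub>R x) \<le> \<bar>c\<bar> *\<^sub>R (labs m + c1 *\<^sub>R p)"
      unfolding labs_scaleR by (rule scaleR_left_mono[OF m(3) abs_ge_zero])
    also have "\<dots> = labs (c *\<^sub>R m) + (\<bar>c\<bar> * c1) *\<^sub>R p"
      by (simp only: labs_scaleR scaleR_add_right scaleR_scaleR)
    finally show "c *\<^sub>R x \<in> ideal_extension I p"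
      using m unfolding ideal_extension_def
      by (intro CollectI bexI[of _ "c *\<^sub>R m"] exI[of _ "\<bar>c\<bar> * c1"])
        (auto intro: subspace_mul[OF sub])
  next
    show "solid (ideal_extension I p)"
      unfolding solid_def ideal_extension_def by (blast intro: order_trans)
  qed
qed

section \<open>Approximation: Cauchy sequences and the lattice Stone-Weierstrass theorem\<close>

lemma Cauchy_dist_le_inverse_Suc:
  fixes X :: "nat \<Rightarrow> 'a::metric_space"
  assumes dist_X: "\<And>m n. dist (X m) (X n) \<le> inverse (real (Suc m)) + inverse (real (Suc n))"
  shows "Cauchy X"
proof (rule metric_CauchyI)
  fix \<epsilon> :: real assume "\<epsilon> > 0"
  then obtain N where N: "inverse (real (Suc N)) < \<epsilon> / 2"
    using reals_Archimedean[of "\<epsilon> / 2"] by auto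
  have "dist (X m) (X n) < \<epsilon>" if "m \<ge> N" "n \<ge> N" for m n
  proof -
    have "inverse (real (Suc m)) \<le> inverse (real (Suc N))" "inverse (real (Suc n)) \<le> inverse (real (Suc N))"
      using that by (simp_all add: field_simps)
    then show ?thesis using dist_X[of m n] N by linarith
  qed
  then show "\<exists>N. \<forall>m\<ge>N. \<forall>n\<ge>N. dist (X m) (X n) < \<epsilon>" by blast
qed

lemma compact_finite_subcover_preimage:
  fixes D :: "'c::topological_space \<Rightarrow> 'c \<Rightarrow> 'd::topological_space"
  assumes K: "compact K" and cont: "\<And>t. t \<in> K \<Longrightarrow> continuous_on K (D t)"
    and diag: "\<And>t. t \<in> K \<Longrightarrow> D t t \<in> U" and U: "open U"
  shows "\<exists>T\<subseteq>K. finite T \<and> (\<forall>x\<in>K. \<exists>t\<in>T. D t x \<in> U)"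
proof -
  have "\<forall>t. \<exists>A. t \<in> K \<longrightarrow> open A \<and> A \<inter> K = D t -` U \<inter> K"
    using cont U unfolding continuous_on_open_invariant by blast
  then obtain A where A: "\<And>t. t \<in> K \<Longrightarrow> open (A t)" "\<And>t. t \<in> K \<Longrightarrow> A t \<inter> K = D t -` U \<inter> K"
    by metis
  have "K \<subseteq> (\<Union>t\<in>K. A t)"
    using A(2) diag by blast
  then obtain T where "T \<subseteq> K" "finite T" "K \<subseteq> (\<Union>t\<in>T. A t)"
    using compactE_image[OF K, of K A] A(1) by metis
  then show ?thesis
    using A(2) by (intro exI[of _ T]) blast
qed

lemma lattice_closed_Max:
  assumes max: "\<And>g h. g \<in> L \<Longrightarrow> h \<in> L \<Longrightarrow> \<exists>k\<in>L. \<forall>x\<in>K. k x = max (g x) (h x)"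
    and T: "finite T" "T \<noteq> {}" "G ` T \<subseteq> L"
  shows "\<exists>k\<in>L. \<forall>x\<in>K. k x = Max ((\<lambda>t. G t x) ` T)"
  using T
proof (induction T rule: finite_ne_induct)
  case (insert t T)
  then obtain k where "k \<in> L" "\<forall>x\<in>K. k x = Max ((\<lambda>t. G t x) ` T)" by auto
  with max[of "G t" k] insert show ?case by auto
qed auto

lemma lattice_closed_Min:
  assumes min: "\<And>g h. g \<in> L \<Longrightarrow> h \<in> L \<Longrightarrow> \<exists>k\<in>L. \<forall>x\<in>K. k x = min (g x) (h x)"
    and T: "finite T" "T \<noteq> {}" "G ` T \<subseteq> L"
  shows "\<exists>k\<in>L. \<forall>x\<in>K. k x = Min ((\<lambda>t. G t x) ` T)"
  using T
proof (induction T rule: finite_ne_induct)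
  case (insert t T)
  then obtain k where "k \<in> L" "\<forall>x\<in>K. k x = Min ((\<lambda>t. G t x) ` T)" by auto
  with min[of "G t" k] insert show ?case by auto
qed auto

lemma lattice_approx_at_point:
  fixes f :: "'c::topological_space \<Rightarrow> real"
  assumes K: "compact K" and f: "continuous_on K f"
    and cont: "\<And>g. g \<in> L \<Longrightarrow> continuous_on K g"
    and min: "\<And>g h. g \<in> L \<Longrightarrow> h \<in> L \<Longrightarrow> \<exists>k\<in>L. \<forall>x\<in>K. k x = min (g x) (h x)"
    and interp: "\<And>s t. s \<in> K \<Longrightarrow> t \<in> K \<Longrightarrow> \<exists>g\<in>L. g s = f s \<and> g t = f t"
    and s: "s \<in> K" and \<epsilon>: "\<epsilon> > 0"
  shows "\<exists>h\<in>L. h s = f s \<and> (\<forall>x\<in>K. h x < f x + \<epsilon>)"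
proof -
  obtain G where G: "\<And>t. t \<in> K \<Longrightarrow> G t \<in> L \<and> G t s = f s \<and> G t t = f t"
    using interp[OF s] by metis
  have "continuous_on K (\<lambda>x. G t x - f x)" if "t \<in> K" for t
    using G[OF that] cont f by (blast intro: continuous_on_diff)
  then obtain T where T: "T \<subseteq> K" "finite T" "\<forall>x\<in>K. \<exists>t\<in>T. G t x - f x \<in> {..<\<epsilon>}"
    using compact_finite_subcover_preimage[OF K _ _ open_lessThan, of "\<lambda>t x. G t x - f x" \<epsilon>]
      G \<epsilon> by auto
  have "T \<noteq> {}" using T(3) s by blast
  then obtain h where h: "h \<in> L" "\<forall>x\<in>K. h x = Min ((\<lambda>t. G t x) ` T)"
    using lattice_closed_Min[OF min T(2)] G T(1) by blast
  have "(\<lambda>t. G t s) ` T = (\<lambda>t. f s) ` T"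
    using G T(1) by (intro image_cong) auto
  then have "(\<lambda>t. G t s) ` T = {f s}"
    using \<open>T \<noteq> {}\<close> by (simp add: image_constant_conv)
  then have "h s = f s" using h(2) s by simp
  moreover have "h x < f x + \<epsilon>" if x: "x \<in> K" for x
  proof -
    obtain t where "t \<in> T" "G t x - f x < \<epsilon>" using T(3) x by auto
    moreover have "h x \<le> G t x" using h(2) x T(2) \<open>t \<in> T\<close> by simp
    ultimately show ?thesis by simp
  qed
  ultimately show ?thesis using h(1) by blast
qed

lemma lattice_Stone_Weierstrass:
  fixes f :: "'c::topological_space \<Rightarrow> real"
  assumes K: "compact K" and f: "continuous_on K f"
    and cont: "\<And>g. g \<in> L \<Longrightarrow> continuous_on K g"
    and max: "\<And>g h. g \<in> L \<Longrightarrow> h \<in> L \<Longrightarrow> \<exists>k\<in>L. \<forall>x\<in>K. k x = max (g x) (h x)"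
    and min: "\<And>g h. g \<in> L \<Longrightarrow> h \<in> L \<Longrightarrow> \<exists>k\<in>L. \<forall>x\<in>K. k x = min (g x) (h x)"
    and interp: "\<And>s t. s \<in> K \<Longrightarrow> t \<in> K \<Longrightarrow> \<exists>g\<in>L. g s = f s \<and> g t = f t"
    and "L \<noteq> {}" and \<epsilon>: "\<epsilon> > 0"
  shows "\<exists>g\<in>L. \<forall>x\<in>K. \<bar>g x - f x\<bar> < \<epsilon>"
proof (cases "K = {}")
  case False
  obtain H where H: "\<And>s. s \<in> K \<Longrightarrow> H s \<in> L \<and> H s s = f s \<and> (\<forall>x\<in>K. H s x < f x + \<epsilon>)"
    using lattice_approx_at_point[OF K f cont min interp _ \<epsilon>] by metis
  have "continuous_on K (\<lambda>x. H s x - f x)" if "s \<in> K" for s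
    using H[OF that] cont f by (blast intro: continuous_on_diff)
  then obtain T where T: "T \<subseteq> K" "finite T" "\<forall>x\<in>K. \<exists>s\<in>T. H s x - f x \<in> {- \<epsilon><..}"
    using compact_finite_subcover_preimage[OF K _ _ open_greaterThan, of "\<lambda>s x. H s x - f x" "- \<epsilon>"]
      H \<epsilon> by auto
  have "T \<noteq> {}" using T(3) False by blast
  then obtain g where g: "g \<in> L" "\<forall>x\<in>K. g x = Max ((\<lambda>s. H s x) ` T)"
    using lattice_closed_Max[OF max T(2)] H T(1) by blast
  have "\<bar>g x - f x\<bar> < \<epsilon>" if x: "x \<in> K" for x
  proof -
    obtain s where "s \<in> T" "H s x - f x > - \<epsilon>" using T(3) x by auto
    moreover have "H s x \<le> g x" using g(2) x T(2) \<open>s \<in> T\<close> by simp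
    moreover have "g x < f x + \<epsilon>"
      using g(2) x T \<open>T \<noteq> {}\<close> H by (simp add: subset_iff)
    ultimately show ?thesis by linarith
  qed
  then show ?thesis using g(1) by blast
qed (use \<open>L \<noteq> {}\<close> in auto)

section \<open>Kakutani's representation of spaces with a strong unit\<close>

locale order_unit_ball =
  fixes e :: "'a::{banach, ordered_real_vector, lattice}"
  assumes unit_nonneg: "0 \<le> e"
    and norm_le_one_iff: "norm x \<le> 1 \<longleftrightarrow> labs x \<le> e"
begin

lemma norm_le_iff:
  assumes "0 \<le> c"
  shows "norm x \<le> c \<longleftrightarrow> labs x \<le> c *\<^sub>R e"
proof (cases "c = 0")
  case True
  then show ?thesis using vector_lattice.abs_le_zero_iff[of x] by auto
next
  case False
  with assms have c: "0 < c" by simp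
  have "norm x \<le> c \<longleftrightarrow> norm (inverse c *\<^sub>R x) \<le> 1"
    using c by (simp add: field_simps)
  also have "\<dots> \<longleftrightarrow> labs (inverse c *\<^sub>R x) \<le> e"
    by (rule norm_le_one_iff)
  also have "\<dots> \<longleftrightarrow> labs x /\<^sub>R c \<le> e"
    using c by (simp add: labs_scaleR)
  also have "\<dots> \<longleftrightarrow> labs x \<le> c *\<^sub>R e"
    using c by (rule pos_divideR_le_eq)
  finally show ?thesis .
qed

lemma labs_le_norm_scaleR: "labs x \<le> norm x *\<^sub>R e"
  using norm_le_iff[of "norm x" x] by simp

lemma banach_lattice: "banach_lattice TYPE('a)"
  unfolding banach_lattice_def
  using norm_le_iff labs_le_norm_scaleR by (meson norm_ge_zero order_trans)

definition characters :: "('a \<Rightarrow> real) set" where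
  "characters = {\<phi>. linear \<phi> \<and> (\<forall>x y. \<phi> (sup x y) = max (\<phi> x) (\<phi> y)) \<and> \<phi> e = 1}"

context
  fixes \<phi> assumes \<phi>: "\<phi> \<in> characters"
begin

lemma character_linear: "linear \<phi>"
  using \<phi> by (simp add: characters_def)

lemma character_sup: "\<phi> (sup x y) = max (\<phi> x) (\<phi> y)"
  using \<phi> by (simp add: characters_def)

lemma character_unit: "\<phi> e = 1"
  using \<phi> by (simp add: characters_def)

lemma character_inf: "\<phi> (inf x y) = min (\<phi> x) (\<phi> y)"
  unfolding vector_lattice.inf_eq_neg_sup[of x y] character_sup linear_neg[OF character_linear]
  by simp

lemma character_mono: "x \<le> y \<Longrightarrow> \<phi> x \<le> \<phi> y"
  using character_sup[of x y] by (simp add: sup_absorb2)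

lemma character_labs: "\<phi> (labs x) = \<bar>\<phi> x\<bar>"
  unfolding labs_def character_sup linear_neg[OF character_linear] by simp

lemma character_abs_le_norm: "\<bar>\<phi> x\<bar> \<le> norm x"
  using character_mono[OF labs_le_norm_scaleR[of x]]
  by (simp add: character_labs linear_scale[OF character_linear] character_unit)

end

text \<open>An ideal containing e is the whole space, so these are the maximal proper ideals.\<close>

definition maximal_ideal :: "'a set \<Rightarrow> bool" where
  "maximal_ideal M \<longleftrightarrow> lattice_ideal M \<and> e \<notin> M \<and>
     (\<forall>J. lattice_ideal J \<longrightarrow> e \<notin> J \<longrightarrow> M \<subseteq> J \<longrightarrow> J = M)"

lemma exists_maximal_ideal:
  assumes "lattice_ideal I" "e \<notin> I"
  shows "\<exists>M. maximal_ideal M \<and> I \<subseteq> M"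
proof -
  define F where "F = {J. lattice_ideal J \<and> e \<notin> J \<and> I \<subseteq> J}"
  have "\<exists>M\<in>F. \<forall>J\<in>F. M \<subseteq> J \<longrightarrow> J = M"
  proof (rule subset_Zorn_nonempty)
    show "F \<noteq> {}" using assms unfolding F_def by blast
  next
    fix C assume C: "C \<noteq> {}" "subset.chain F C"
    then have CF: "C \<subseteq> F" and "subset.chain {J. lattice_ideal J} C"
      unfolding subset_chain_def F_def by auto
    then have "lattice_ideal (\<Union>C)" using C(1) lattice_ideal_Union_chain by blast
    moreover have "e \<notin> \<Union>C" "I \<subseteq> \<Union>C" using CF C(1) unfolding F_def by auto
    ultimately show "\<Union>C \<in> F" unfolding F_def by blast
  qed
  then obtain M where M: "M \<in> F" "\<forall>J\<in>F. M \<subseteq> J \<longrightarrow> J = M" by blast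
  then have "maximal_ideal M" unfolding F_def maximal_ideal_def by blast
  then show ?thesis using M(1) unfolding F_def by blast
qed

lemma scaleR_unit_mem_ideal:
  assumes "lattice_ideal I" "e \<notin> I" "c *\<^sub>R e \<in> I"
  shows "c = 0"
proof (rule ccontr)
  assume "c \<noteq> 0"
  then have "e = inverse c *\<^sub>R (c *\<^sub>R e)" by simp
  moreover have "inverse c *\<^sub>R (c *\<^sub>R e) \<in> I"
    using assms(1,3) unfolding lattice_ideal_def by (blast intro: subspace_mul)
  ultimately show False using assms(2) by simp
qed

lemma maximal_idealD:
  assumes "maximal_ideal M"
  shows "lattice_ideal M" "e \<notin> M" "subspace M"
  using assms unfolding maximal_ideal_def lattice_ideal_def by auto

lemma maximal_ideal_unit_le:
  assumes M: "maximal_ideal M" and p: "0 \<le> p" "p \<notin> M"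
  shows "\<exists>m\<in>M. \<exists>c>0. e \<le> labs m + c *\<^sub>R p"
proof -
  have "e \<in> ideal_extension M p"
  proof (rule ccontr)
    assume "e \<notin> ideal_extension M p"
    then have "ideal_extension M p = M"
      using M lattice_ideal_ideal_extension[OF maximal_idealD(1)[OF M] p(1)] subset_ideal_extension
      unfolding maximal_ideal_def by blast
    then show False
      using mem_ideal_extension[OF maximal_idealD(1)[OF M] p(1)] p(2) by simp
  qed
  then obtain m c where m: "m \<in> M" "c \<ge> 0" "e \<le> labs m + c *\<^sub>R p"
    unfolding ideal_extension_def using unit_nonneg by auto
  have "e \<le> labs m + (c + 1) *\<^sub>R p"
    using m(3) by (rule order_trans) (use p(1) in \<open>intro add_left_mono scaleR_right_mono, auto\<close>)
  then show ?thesis using m(1,2) by (intro bexI[of _ m] exI[of _ "c + 1"]) auto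
qed

lemma maximal_ideal_prime:
  assumes M: "maximal_ideal M" and pq: "0 \<le> p" "0 \<le> q" "inf p q = 0"
  shows "p \<in> M \<or> q \<in> M"
proof (rule ccontr)
  assume "\<not> (p \<in> M \<or> q \<in> M)"
  then obtain m c m' c' where m: "m \<in> M" "c > 0" "e \<le> labs m + c *\<^sub>R p"
    and m': "m' \<in> M" "c' > 0" "e \<le> labs m' + c' *\<^sub>R q"
    using maximal_ideal_unit_le[OF M] pq by meson
  define s where "s = labs m + labs m'"
  define C where "C = max c c'"
  have "c *\<^sub>R p \<le> C *\<^sub>R p" "c' *\<^sub>R q \<le> C *\<^sub>R q"
    unfolding C_def using pq by (auto intro: scaleR_right_mono)
  moreover have "labs m \<le> s" "labs m' \<le> s"
    unfolding s_def by (auto intro: add_increasing add_increasing2)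
  ultimately have "labs m + c *\<^sub>R p \<le> s + C *\<^sub>R p" "labs m' + c' *\<^sub>R q \<le> s + C *\<^sub>R q"
    by (auto intro: add_mono)
  then have "e \<le> inf (s + C *\<^sub>R p) (s + C *\<^sub>R q)"
    using m(3) m'(3) by (auto elim: order_trans)
  also have "\<dots> = s"
    using m(2) pq(3) unfolding C_def
    by (simp add: vector_lattice.add_inf_distrib_left[symmetric] scaleR_inf_nonneg[symmetric])
  finally have "e \<le> s" .
  moreover have "s \<in> M"
    unfolding s_def using m m' maximal_idealD[OF M]
    by (blast intro: subspace_add lattice_ideal_labs)
  ultimately show False
    using maximal_idealD[OF M] lattice_ideal_nonneg_le unit_nonneg by blast
qed

lemma maximal_ideal_approx:
  assumes M: "maximal_ideal M" and p: "0 \<le> p"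
    and approx: "\<And>\<epsilon>. \<epsilon> > 0 \<Longrightarrow> \<exists>m\<in>M. p \<le> m + \<epsilon> *\<^sub>R e"
  shows "p \<in> M"
proof (rule ccontr)
  assume "p \<notin> M"
  then obtain m' c where m': "m' \<in> M" "c > 0" "e \<le> labs m' + c *\<^sub>R p"
    using maximal_ideal_unit_le[OF M p] by blast
  obtain m where m: "m \<in> M" "p \<le> m + inverse (2 * c) *\<^sub>R e"
    using approx[of "inverse (2 * c)"] m'(2) by auto
  have "p \<le> labs m + inverse (2 * c) *\<^sub>R e"
    using m(2) add_right_mono[OF vector_lattice.abs_ge_self[of m]] by (rule order_trans)
  then have "c *\<^sub>R p \<le> c *\<^sub>R (labs m + inverse (2 * c) *\<^sub>R e)"
    using m'(2) by (intro scaleR_left_mono) auto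
  also have "\<dots> = c *\<^sub>R labs m + (1/2) *\<^sub>R e"
    using m'(2) by (simp add: scaleR_add_right)
  finally have "labs m' + c *\<^sub>R p \<le> (labs m' + c *\<^sub>R labs m) + (1/2) *\<^sub>R e"
    unfolding add.assoc by (rule add_left_mono)
  with m'(3) have "e \<le> (labs m' + c *\<^sub>R labs m) + (1/2) *\<^sub>R e"
    by (rule order_trans)
  moreover have "e = (1/2) *\<^sub>R e + (1/2) *\<^sub>R e"
    unfolding scaleR_add_left[symmetric] by simp
  ultimately have le: "(1/2) *\<^sub>R e \<le> labs m' + c *\<^sub>R labs m"
    using add_le_cancel_right[of "(1/2) *\<^sub>R e" "(1/2) *\<^sub>R e" "labs m' + c *\<^sub>R labs m"] by argo
  have mem: "labs m' + c *\<^sub>R labs m \<in> M"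
    using m m' maximal_idealD[OF M] by (blast intro: subspace_add subspace_mul lattice_ideal_labs)
  have "0 \<le> (1/2::real) *\<^sub>R e"
    using unit_nonneg by (intro scaleR_nonneg_nonneg) auto
  then have "(1/2) *\<^sub>R e \<in> M"
    using lattice_ideal_nonneg_le[OF maximal_idealD(1)[OF M] mem _ le] by simp
  then show False
    using scaleR_unit_mem_ideal[OF maximal_idealD(1,2)[OF M]] by force
qed

lemma pprt_mem_maximal_ideal:
  assumes M: "maximal_ideal M"
    and approx: "\<And>\<epsilon>. \<epsilon> > 0 \<Longrightarrow> \<exists>\<delta>. 0 \<le> \<delta> \<and> \<delta> \<le> \<epsilon> \<and> vector_lattice.pprt (w - \<delta> *\<^sub>R e) \<in> M"
  shows "vector_lattice.pprt w \<in> M"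
proof (rule maximal_ideal_approx[OF M vector_lattice.zero_le_pprt])
  fix \<epsilon> :: real assume "\<epsilon> > 0"
  then obtain \<delta> where \<delta>: "0 \<le> \<delta>" "\<delta> \<le> \<epsilon>" "vector_lattice.pprt (w - \<delta> *\<^sub>R e) \<in> M"
    using approx by blast
  define m where "m = vector_lattice.pprt (w - \<delta> *\<^sub>R e)"
  have "w \<le> m + \<delta> *\<^sub>R e"
    unfolding m_def vector_lattice.pprt_def by (simp add: diff_le_eq[symmetric])
  also have "\<dots> \<le> m + \<epsilon> *\<^sub>R e"
    using \<delta>(2) unit_nonneg by (intro add_left_mono scaleR_right_mono)
  finally have "w \<le> m + \<epsilon> *\<^sub>R e" .
  moreover have "0 \<le> m + \<epsilon> *\<^sub>R e"
    unfolding m_def using \<open>\<epsilon> > 0\<close> unit_nonneg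
    by (intro add_nonneg_nonneg vector_lattice.zero_le_pprt scaleR_nonneg_nonneg) auto
  ultimately have "vector_lattice.pprt w \<le> m + \<epsilon> *\<^sub>R e"
    by (simp add: vector_lattice.pprt_def)
  then show "\<exists>m\<in>M. vector_lattice.pprt w \<le> m + \<epsilon> *\<^sub>R e"
    using \<delta>(3) m_def by blast
qed

lemma maximal_ideal_pprt_le_norm:
  assumes M: "maximal_ideal M" and mem: "vector_lattice.pprt (\<mu> *\<^sub>R e - z) \<in> M"
  shows "\<mu> \<le> norm z"
proof (rule ccontr)
  assume "\<not> \<mu> \<le> norm z"
  then have pos: "\<mu> - norm z > 0" by simp
  have "(\<mu> - norm z) *\<^sub>R e \<le> \<mu> *\<^sub>R e - z"
    using order_trans[OF vector_lattice.abs_ge_self labs_le_norm_scaleR, of z]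
    by (simp add: algebra_simps)
  also have "\<dots> \<le> vector_lattice.pprt (\<mu> *\<^sub>R e - z)"
    by (simp add: vector_lattice.pprt_def)
  finally have le: "(\<mu> - norm z) *\<^sub>R e \<le> vector_lattice.pprt (\<mu> *\<^sub>R e - z)" .
  have "0 \<le> (\<mu> - norm z) *\<^sub>R e"
    using unit_nonneg pos by (intro scaleR_nonneg_nonneg) auto
  then have "(\<mu> - norm z) *\<^sub>R e \<in> M"
    using lattice_ideal_nonneg_le[OF maximal_idealD(1)[OF M] mem _ le] by blast
  then have "\<mu> - norm z = 0"
    by (rule scaleR_unit_mem_ideal[OF maximal_idealD(1,2)[OF M]])
  with pos show False by simp
qed

text \<open>The coefficient is the supremum of the \<mu> with pprt (\<mu> e - z) \<in> M; primality and the
  Archimedean property of M put both pprt (l e - z) and pprt (z - l e) into M.\<close>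

lemma maximal_ideal_codim_one:
  assumes M: "maximal_ideal M"
  shows "\<exists>l. z - l *\<^sub>R e \<in> M"
proof -
  define A where "A = {\<mu>. vector_lattice.pprt (\<mu> *\<^sub>R e - z) \<in> M}"
  have dichotomy: "\<mu> \<in> A \<or> vector_lattice.pprt (z - \<mu> *\<^sub>R e) \<in> M" for \<mu>
    using maximal_ideal_prime[OF M vector_lattice.zero_le_pprt vector_lattice.zero_le_pprt
        inf_pprt_pprt_minus[of "\<mu> *\<^sub>R e - z"]]
    unfolding A_def by simp
  have "- z \<le> norm z *\<^sub>R e"
    using order_trans[OF vector_lattice.abs_ge_minus_self labs_le_norm_scaleR] by blast
  then have "- norm z \<in> A"
    using subspace_0[OF maximal_idealD(3)[OF M]] unfolding A_def
    by (simp add: algebra_simps minus_le_iff)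
  then have A_ne: "A \<noteq> {}" by blast
  have A_bdd: "\<mu> \<le> norm z" if "\<mu> \<in> A" for \<mu>
    using that maximal_ideal_pprt_le_norm[OF M] unfolding A_def by blast
  define l where "l = Sup A"
  have le_l: "\<mu> \<le> l" if "\<mu> \<in> A" for \<mu>
    unfolding l_def using that A_bdd by (intro cSup_upper bdd_aboveI) auto
  have below: "vector_lattice.pprt (l *\<^sub>R e - z) \<in> M"
  proof (rule pprt_mem_maximal_ideal[OF M])
    fix \<epsilon> :: real assume "\<epsilon> > 0"
    then have "l - \<epsilon> < Sup A" unfolding l_def by simp
    then obtain \<mu> where "\<mu> \<in> A" "l - \<epsilon> < \<mu>"
      using less_cSupE[OF _ A_ne] by blast
    moreover have "\<mu> \<le> l" using le_l \<open>\<mu> \<in> A\<close> .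
    ultimately show "\<exists>\<delta>. 0 \<le> \<delta> \<and> \<delta> \<le> \<epsilon> \<and> vector_lattice.pprt (l *\<^sub>R e - z - \<delta> *\<^sub>R e) \<in> M"
      unfolding A_def by (intro exI[of _ "l - \<mu>"]) (auto simp: algebra_simps)
  qed
  have above: "vector_lattice.pprt (z - l *\<^sub>R e) \<in> M"
  proof (rule pprt_mem_maximal_ideal[OF M])
    fix \<epsilon> :: real assume "\<epsilon> > 0"
    have "l + \<epsilon> \<notin> A"
      using le_l \<open>\<epsilon> > 0\<close> by force
    then show "\<exists>\<delta>. 0 \<le> \<delta> \<and> \<delta> \<le> \<epsilon> \<and> vector_lattice.pprt (z - l *\<^sub>R e - \<delta> *\<^sub>R e) \<in> M"
      using dichotomy[of "l + \<epsilon>"] \<open>\<epsilon> > 0\<close>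
      by (intro exI[of _ \<epsilon>]) (auto simp: algebra_simps)
  qed
  have "labs (z - l *\<^sub>R e) \<in> M"
    unfolding labs_eq_pprt_add_pprt_minus using above below maximal_idealD(3)[OF M]
    by (simp add: subspace_add)
  then have "z - l *\<^sub>R e \<in> M"
    by (rule lattice_ideal_solid[OF maximal_idealD(1)[OF M]]) simp
  then show ?thesis ..
qed

definition ideal_character :: "'a set \<Rightarrow> 'a \<Rightarrow> real" where
  "ideal_character M z = (THE l. z - l *\<^sub>R e \<in> M)"

lemma ideal_character_eq:
  assumes M: "maximal_ideal M" and l: "z - l *\<^sub>R e \<in> M"
  shows "ideal_character M z = l"
  unfolding ideal_character_def
proof (rule the_equality)
  show "z - l *\<^sub>R e \<in> M" by (rule l)
  fix l' assume l': "z - l' *\<^sub>R e \<in> M"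
  have "(l - l') *\<^sub>R e \<in> M"
    using subspace_diff[OF maximal_idealD(3)[OF M] l' l] by (simp add: algebra_simps)
  then show "l' = l"
    using scaleR_unit_mem_ideal[OF maximal_idealD(1,2)[OF M]] by fastforce
qed

lemma ideal_character_mem:
  assumes M: "maximal_ideal M"
  shows "z - ideal_character M z *\<^sub>R e \<in> M"
  using maximal_ideal_codim_one[OF M, of z] ideal_character_eq[OF M] by auto

lemma ideal_character_in_characters:
  assumes M: "maximal_ideal M"
  shows "ideal_character M \<in> characters"
proof -
  let ?\<phi> = "ideal_character M"
  have sub: "subspace M" and mem: "\<And>z. z - ?\<phi> z *\<^sub>R e \<in> M"
    using maximal_idealD[OF M] ideal_character_mem[OF M] by auto
  have "?\<phi> (x + y) = ?\<phi> x + ?\<phi> y" for x y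
  proof (rule ideal_character_eq[OF M])
    show "x + y - (?\<phi> x + ?\<phi> y) *\<^sub>R e \<in> M"
      using subspace_add[OF sub mem mem] by (simp add: algebra_simps)
  qed
  moreover have "?\<phi> (c *\<^sub>R x) = c *\<^sub>R ?\<phi> x" for c x
  proof (rule ideal_character_eq[OF M])
    show "c *\<^sub>R x - (c *\<^sub>R ?\<phi> x) *\<^sub>R e \<in> M"
      using subspace_mul[OF sub mem, of c] by (simp add: algebra_simps)
  qed
  moreover have "?\<phi> (sup x y) = max (?\<phi> x) (?\<phi> y)" for x y
  proof (rule ideal_character_eq[OF M])
    have "labs (sup x y - max (?\<phi> x) (?\<phi> y) *\<^sub>R e)
        \<le> labs (labs (x - ?\<phi> x *\<^sub>R e) + labs (y - ?\<phi> y *\<^sub>R e))"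
      unfolding scaleR_max_nonneg[OF unit_nonneg] vector_lattice.abs_add_abs
      by (rule labs_sup_diff_le)
    moreover have "labs (x - ?\<phi> x *\<^sub>R e) + labs (y - ?\<phi> y *\<^sub>R e) \<in> M"
      using maximal_idealD(1)[OF M] by (intro subspace_add[OF sub] lattice_ideal_labs mem)
    ultimately show "sup x y - max (?\<phi> x) (?\<phi> y) *\<^sub>R e \<in> M"
      using lattice_ideal_solid[OF maximal_idealD(1)[OF M]] by blast
  qed
  moreover have "?\<phi> e = 1"
    using ideal_character_eq[OF M, of e 1] subspace_0[OF sub] by simp
  ultimately show ?thesis
    unfolding characters_def linear_iff by blast
qed

text \<open>A maximal ideal containing e - a yields a character with \<phi> a = \<phi> e.\<close>

lemma exists_character_eq_one:
  assumes a: "0 \<le> a" "norm a = 1"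
  shows "\<exists>\<phi>\<in>characters. \<phi> a = 1"
proof -
  define u where "u = e - a"
  have "a \<le> e" using a norm_le_one_iff[of a] by simp
  then have u: "0 \<le> u" unfolding u_def by simp
  have "e \<notin> ideal_extension {0} u"
  proof
    assume "e \<in> ideal_extension {0} u"
    then obtain c where c: "c \<ge> 0" "e \<le> c *\<^sub>R (e - a)"
      unfolding ideal_extension_def u_def using unit_nonneg by auto
    show False
    proof (cases "c = 0")
      case True
      then have "labs a \<le> 0" using c(2) a norm_le_one_iff[of a] by simp
      then show False using a(2) by simp
    next
      case False
      with c(1) have "c > 0" by simp
      have "c *\<^sub>R a \<le> (c - 1) *\<^sub>R e"
        using c(2) by (simp add: algebra_simps)
      then have "inverse c *\<^sub>R (c *\<^sub>R a) \<le> inverse c *\<^sub>R ((c - 1) *\<^sub>R e)"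
        using \<open>c > 0\<close> by (intro scaleR_left_mono) auto
      then have "a \<le> ((c - 1) / c) *\<^sub>R e"
        using \<open>c > 0\<close> by (simp add: divide_inverse mult.commute)
      also have "\<dots> \<le> max 0 ((c - 1) / c) *\<^sub>R e"
        using unit_nonneg by (intro scaleR_right_mono) auto
      finally have "norm a \<le> max 0 ((c - 1) / c)"
        using norm_le_iff[of "max 0 ((c - 1) / c)" a] a(1) by simp
      moreover have "max 0 ((c - 1) / c) < 1" using \<open>c > 0\<close> by simp
      ultimately show False using a(2) by simp
    qed
  qed
  then obtain M where M: "maximal_ideal M" "ideal_extension {0} u \<subseteq> M"
    using exists_maximal_ideal[OF lattice_ideal_ideal_extension[OF lattice_ideal_zero u]] by blast
  then have "a - 1 *\<^sub>R e \<in> M"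
    using mem_ideal_extension[OF lattice_ideal_zero u] subspace_neg[OF maximal_idealD(3)[OF M(1)]]
    unfolding u_def by fastforce
  then show ?thesis
    using ideal_character_in_characters[OF M(1)] ideal_character_eq[OF M(1)] by blast
qed

lemma exists_character_norming:
  assumes "y \<noteq> 0"
  shows "\<exists>\<phi>\<in>characters. \<bar>\<phi> y\<bar> = norm y"
proof -
  define a where "a = labs y /\<^sub>R norm y"
  have "0 \<le> a"
    unfolding a_def by (intro scaleR_nonneg_nonneg) auto
  moreover have "norm a = 1"
    unfolding a_def using assms norm_labs[OF banach_lattice] by simp
  ultimately
  obtain \<phi> where \<phi>: "\<phi> \<in> characters" "\<phi> a = 1"
    using exists_character_eq_one by blast
  have "labs y = norm y *\<^sub>R a" unfolding a_def using assms by simp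
  then have "\<bar>\<phi> y\<bar> = norm y * \<phi> a"
    using character_labs[OF \<phi>(1), of y] linear_scale[OF character_linear[OF \<phi>(1)]]
    by (metis real_scaleR_def)
  then show ?thesis using \<phi> by auto
qed

lemma norm_le_of_characters_le:
  assumes "\<And>\<phi>. \<phi> \<in> characters \<Longrightarrow> \<bar>\<phi> y\<bar> \<le> B" "0 \<le> B"
  shows "norm y \<le> B"
  using assms exists_character_norming[of y] by (cases "y = 0") force+

lemma continuous_on_evaluation: "continuous_on S (\<lambda>\<phi>::'a \<Rightarrow> real. \<phi> x)"
  by (rule continuous_on_subset[OF continuous_on_product_coordinates subset_UNIV])

lemma closed_characters: "closed characters"
proof -
  have "characters = (\<Inter>x. \<Inter>y. {\<phi>. \<phi> (x + y) = \<phi> x + \<phi> y}) \<inter> (\<Inter>c. \<Inter>x. {\<phi>. \<phi> (c *\<^sub>R x) = c * \<phi> x})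
      \<inter> (\<Inter>x. \<Inter>y. {\<phi>. \<phi> (sup x y) = max (\<phi> x) (\<phi> y)}) \<inter> {\<phi>. \<phi> e = 1}"
    by (auto simp: characters_def linear_iff)
  then show ?thesis
    by (simp only:) (intro closed_Int closed_INT ballI closed_Collect_eq continuous_intros
        continuous_on_evaluation)
qed

lemma compact_characters: "compact characters"
proof -
  define B where "B = (\<Pi>\<^sub>E x\<in>(UNIV::'a set). cball (0::real) (norm x))"
  have "compactin (product_topology (\<lambda>_. euclideanreal) UNIV) B"
    unfolding B_def compactin_PiE by simp
  then have "compact B" by (simp add: euclidean_product_topology)
  moreover have "characters \<subseteq> B"
    unfolding B_def using character_abs_le_norm by (auto simp: PiE_UNIV_domain)
  ultimately show ?thesis
    using closed_characters by (metis compact_Int_closed inf.absorb_iff2)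
qed

lemma Hausdorff_characters: "Hausdorff_space (top_of_set characters)"
  by (intro Hausdorff_space_subtopology)
    (simp add: Hausdorff_space_product_topology flip: euclidean_product_topology)

lemma characters_interpolate:
  assumes "s \<in> characters" "t \<in> characters" "s = t \<Longrightarrow> a = b"
  shows "\<exists>x. s x = a \<and> t x = b"
proof (cases "s = t")
  case True
  then show ?thesis
    using assms linear_scale[OF character_linear[OF assms(2)]] character_unit[OF assms(2)]
    by (intro exI[of _ "a *\<^sub>R e"]) simp
next
  case False
  then obtain z where z: "s z \<noteq> t z" by auto
  define \<beta> where "\<beta> = (a - b) / (s z - t z)"
  define \<alpha> where "\<alpha> = a - \<beta> * s z"
  have "s (\<alpha> *\<^sub>R e + \<beta> *\<^sub>R z) = \<alpha> + \<beta> * s z" "t (\<alpha> *\<^sub>R e + \<beta> *\<^sub>R z) = \<alpha> + \<beta> * t z"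
    using assms(1,2) by (simp_all add: linear_add[OF character_linear] linear_scale[OF character_linear]
        character_unit)
  moreover have "\<beta> * (s z - t z) = a - b"
    using z unfolding \<beta>_def by simp
  then have "\<alpha> + \<beta> * s z = a" "\<alpha> + \<beta> * t z = b"
    unfolding \<alpha>_def by (simp_all add: algebra_simps)
  ultimately show ?thesis by metis
qed

lemma evaluations_dense:
  assumes f: "continuous_on characters f" and \<epsilon>: "\<epsilon> > 0"
  shows "\<exists>x. \<forall>\<phi>\<in>characters. \<bar>\<phi> x - f \<phi>\<bar> < \<epsilon>"
proof -
  let ?L = "range (\<lambda>x \<phi>. \<phi> (x::'a))"
  have "\<exists>g\<in>?L. \<forall>\<phi>\<in>characters. \<bar>g \<phi> - f \<phi>\<bar> < \<epsilon>"
  proof (rule lattice_Stone_Weierstrass[OF compact_characters f])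
    show "\<exists>k\<in>?L. \<forall>\<phi>\<in>characters. k \<phi> = max (g \<phi>) (h \<phi>)" if gh: "g \<in> ?L" "h \<in> ?L" for g h
    proof -
      obtain y z where "g = (\<lambda>\<phi>. \<phi> y)" "h = (\<lambda>\<phi>. \<phi> z)" using gh by blast
      then show ?thesis by (intro bexI[of _ "\<lambda>\<phi>. \<phi> (sup y z)"]) (auto simp: character_sup)
    qed
    show "\<exists>k\<in>?L. \<forall>\<phi>\<in>characters. k \<phi> = min (g \<phi>) (h \<phi>)" if gh: "g \<in> ?L" "h \<in> ?L" for g h
    proof -
      obtain y z where "g = (\<lambda>\<phi>. \<phi> y)" "h = (\<lambda>\<phi>. \<phi> z)" using gh by blast
      then show ?thesis by (intro bexI[of _ "\<lambda>\<phi>. \<phi> (inf y z)"]) (auto simp: character_inf)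
    qed
    show "\<exists>g\<in>?L. g s = f s \<and> g t = f t" if st: "s \<in> characters" "t \<in> characters" for s t
    proof -
      obtain x where "s x = f s" "t x = f t"
        using characters_interpolate[OF st, of "f s" "f t"] by auto
      then show ?thesis by (intro bexI[of _ "\<lambda>\<phi>. \<phi> x"]) auto
    qed
    show "continuous_on characters g" if "g \<in> ?L" for g
      using that continuous_on_evaluation by blast
  qed (use \<epsilon> in blast)+
  then show ?thesis by blast
qed

lemma character_bounded_linear:
  assumes "\<phi> \<in> characters"
  shows "bounded_linear \<phi>"
  using character_abs_le_norm[OF assms] character_linear[OF assms]
  by (intro bounded_linear_intro[of _ 1]) (auto simp: linear_add linear_scale)

lemma evaluations_onto:
  assumes f: "continuous_on characters f"
  shows "\<exists>x. \<forall>\<phi>\<in>characters. \<phi> x = f \<phi>"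
proof -
  have "\<forall>n. \<exists>x. \<forall>\<phi>\<in>characters. \<bar>\<phi> x - f \<phi>\<bar> < inverse (real (Suc n))"
    using evaluations_dense[OF f] by simp
  then obtain X where X: "\<And>n \<phi>. \<phi> \<in> characters \<Longrightarrow> \<bar>\<phi> (X n) - f \<phi>\<bar> < inverse (real (Suc n))"
    by metis
  have "dist (X m) (X n) \<le> inverse (real (Suc m)) + inverse (real (Suc n))" for m n
    unfolding dist_norm
  proof (rule norm_le_of_characters_le)
    fix \<phi> assume \<phi>: "\<phi> \<in> characters"
    have "\<phi> (X m - X n) = (\<phi> (X m) - f \<phi>) - (\<phi> (X n) - f \<phi>)"
      using linear_diff[OF character_linear[OF \<phi>]] by simp
    then show "\<bar>\<phi> (X m - X n)\<bar> \<le> inverse (real (Suc m)) + inverse (real (Suc n))"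
      using X[OF \<phi>, of m] X[OF \<phi>, of n] by linarith
  qed simp
  then have "Cauchy X"
    by (rule Cauchy_dist_le_inverse_Suc)
  then obtain x where x: "X \<longlonglongrightarrow> x"
    using Cauchy_convergent_iff convergent_def by blast
  have "\<phi> x = f \<phi>" if \<phi>: "\<phi> \<in> characters" for \<phi>
  proof (rule LIMSEQ_unique)
    show "(\<lambda>n. \<phi> (X n)) \<longlonglongrightarrow> \<phi> x"
      using bounded_linear.tendsto[OF character_bounded_linear[OF \<phi>] x] .
    have "\<forall>n. norm (\<phi> (X n) - f \<phi>) \<le> inverse (real (Suc n))"
      using X[OF \<phi>] less_imp_le by (simp only: real_norm_def) blast
    then have "(\<lambda>n. \<phi> (X n) - f \<phi>) \<longlonglongrightarrow> 0"
      by (intro Lim_null_comparison[OF always_eventually LIMSEQ_inverse_real_of_nat])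
    then show "(\<lambda>n. \<phi> (X n)) \<longlonglongrightarrow> f \<phi>"
      by (rule LIM_zero_cancel)
  qed
  then show ?thesis by blast
qed

lemma sup_norm_evaluation:
  "sup_norm (top_of_set characters) (\<lambda>\<phi>. if \<phi> \<in> characters then \<phi> x else 0) = norm x"
proof (cases "x = 0")
  case True
  have "(SUP \<phi>\<in>characters. \<bar>if \<phi> \<in> characters then \<phi> x else 0\<bar>) = 0" if "characters \<noteq> {}"
    using True that by (simp add: linear_0[OF character_linear] cong: SUP_cong_simp)
  then show ?thesis using True by (simp add: sup_norm_def)
next
  case False
  then obtain \<psi> where \<psi>: "\<psi> \<in> characters" "\<bar>\<psi> x\<bar> = norm x"
    using exists_character_norming by blast
  have "(SUP \<phi>\<in>characters. \<bar>if \<phi> \<in> characters then \<phi> x else 0\<bar>) = norm x"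
    using \<psi> character_abs_le_norm by (intro cSup_eq_maximum) force+
  then show ?thesis using \<psi> by (auto simp: sup_norm_def)
qed

theorem Kakutani_representation:
  "\<exists>(K :: ('a \<Rightarrow> real) topology) (\<Phi> :: 'a \<Rightarrow> ('a \<Rightarrow> real) \<Rightarrow> real).
     compact_space K \<and> Hausdorff_space K \<and> lattice_isometry_onto_CK \<Phi> K"
proof (intro exI conjI)
  define \<Phi> where "\<Phi> = (\<lambda>x (\<phi>::'a \<Rightarrow> real). if \<phi> \<in> characters then \<phi> x else 0)"
  let ?K = "top_of_set characters"
  show "compact_space ?K"
    using compact_characters compact_space_subtopology compactin_euclidean_iff by blast
  show "Hausdorff_space ?K" by (rule Hausdorff_characters)
  have "\<Phi> ` UNIV = Cfun ?K"
  proof (intro equalityI subsetI)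
    fix f assume "f \<in> \<Phi> ` UNIV"
    then obtain x where "f = \<Phi> x" by blast
    moreover have "continuous_on characters (\<lambda>\<phi>. \<phi> x)" by (rule continuous_on_evaluation)
    ultimately show "f \<in> Cfun ?K"
      unfolding Cfun_def \<Phi>_def by (auto simp: continuous_map_iff_continuous cong: continuous_on_cong)
  next
    fix f assume "f \<in> Cfun ?K"
    then have "continuous_on characters f" "\<forall>\<phi>. \<phi> \<notin> characters \<longrightarrow> f \<phi> = 0"
      unfolding Cfun_def by (auto simp: continuous_map_iff_continuous)
    then show "f \<in> \<Phi> ` UNIV"
      using evaluations_onto unfolding \<Phi>_def by (fastforce simp: fun_eq_iff)
  qed
  moreover have "inj \<Phi>"
  proof (rule injI)
    fix x y assume "\<Phi> x = \<Phi> y"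
    then have "\<phi> x = \<phi> y" if "\<phi> \<in> characters" for \<phi>
      using that fun_cong[of "\<Phi> x" "\<Phi> y" \<phi>] unfolding \<Phi>_def by simp
    then have "norm (x - y) \<le> 0"
      by (intro norm_le_of_characters_le) (simp_all add: linear_diff[OF character_linear])
    then show "x = y" by simp
  qed
  ultimately show "lattice_isometry_onto_CK \<Phi> ?K"
    unfolding lattice_isometry_onto_CK_def bij_betw_def \<Phi>_def
    by (auto simp: fun_eq_iff linear_add linear_scale character_linear character_sup sup_norm_evaluation)
qed

end

theorem mainTheorem14:
  assumes "AM_space TYPE('a::{banach, ordered_real_vector, lattice})"
    and "\<exists>S. finite S \<and> S \<subseteq> cball (0::'a) 1 \<and>
               cball (0::'a) 1 = closure (solid_convex_hull S)"
  shows "\<exists>(K :: ('a \<Rightarrow> real) topology) (\<Phi> :: 'a \<Rightarrow> ('a \<Rightarrow> real) \<Rightarrow> real).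
           compact_space K \<and> Hausdorff_space K \<and> lattice_isometry_onto_CK \<Phi> K"
proof -
  obtain e :: 'a where "0 \<le> e" "\<And>x. norm x \<le> 1 \<longleftrightarrow> labs x \<le> e"
    using assms AM_space_unit_ball_eq_order_interval by metis
  then interpret order_unit_ball e by unfold_locales
  show ?thesis by (rule Kakutani_representation)
qed

end
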